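(* Every metrizable space $X$ has a uniform Eberlein compactification, i.e. there is a uniform Eberlein compact space $K$ containing a dense subspace homeomorphic to $X$.
   Context: A compact space is uniform Eberlein if it is homeomorphic to a compact subset of a Hilbert space endowed with its weak topology. A compactification of a space $X$ is a compact Hausdorff space containing (a homeomorphic copy of) $X$ as a dense subspace. *)

theory Defs
  imports "HOL-Analysis.Analysis"
begin

text \<open>The Hilbert space l2(Gamma): real functions supported in Gamma with square-summable values.
  Every Hilbert space is isometrically isomorphic to some l2(Gamma).\<close>
definition l2 :: "'i set \<Rightarrow> ('i \<Rightarrow> real) set" where
  "l2 \<Gamma> = {f. (\<forall>i. i \<notin> \<Gamma> \<longrightarrow> f i = 0) \<and> (\<lambda>i. (f i)\<^sup>2) summable_on \<Gamma>}"

definition l2_inner :: "'i set \<Rightarrow> ('i \<Rightarrow> real) \<Rightarrow> ('i \<Rightarrow> real) \<Rightarrow> real" where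
  "l2_inner \<Gamma> f g = (\<Sum>\<^sub>\<infinity>i\<in>\<Gamma>. f i * g i)"

definition weak_l2 :: "'i set \<Rightarrow> ('i \<Rightarrow> real) topology" where
  "weak_l2 \<Gamma> = subtopology
     (topology_generated_by {{f. l2_inner \<Gamma> f g \<in> U} | g U. g \<in> l2 \<Gamma> \<and> open U})
     (l2 \<Gamma>)"

text \<open>Gamma ranges over subsets of the carrier type of K, which suffices since
  weight(K) is at most |K| for compact Hausdorff K.\<close>
definition uniform_eberlein :: "'b topology \<Rightarrow> bool" where
  "uniform_eberlein K \<longleftrightarrow> compact_space K \<and>
     (\<exists>(\<Gamma>::'b set) C. C \<subseteq> l2 \<Gamma> \<and> compactin (weak_l2 \<Gamma>) C \<and>
        K homeomorphic_space subtopology (weak_l2 \<Gamma>) C)"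

end

theory Submission
  imports Defs
begin

text \<open>
  Every metrizable space X has a uniform Eberlein compactification. The compactification is
  built inside the closed unit ball B of a Hilbert space l2(Gamma), in three steps.

  (1) On B the weak topology of l2(Gamma) coincides with the topology of pointwise convergence,
      because on bounded sets a pairing with a fixed l2 vector is uniformly approximated by
      finite partial sums. As B is closed in the cube [-1,1]^Gamma, it is weakly compact.
  (2) A metric space carries a sigma-discrete family of Urysohn bump functions h k s which
      separates points from closed sets (Rudin's sigma-discrete open refinements).
  (3) Weighting the bumps of level k by 2^-(k+1) gives an embedding of X into B; the closure
      of its image is a weakly compact subset of l2(Gamma) in which X is dense.
\<close>

definition l2_ball :: "'i set \<Rightarrow> ('i \<Rightarrow> real) set" where
  "l2_ball \<Gamma> = {f. (\<forall>i. i \<notin> \<Gamma> \<longrightarrow> f i = 0) \<and>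
                 (\<forall>F. finite F \<and> F \<subseteq> \<Gamma> \<longrightarrow> (\<Sum>i\<in>F. (f i)\<^sup>2) \<le> 1)}"

lemma topspace_powertop_real_UNIV [simp]: "topspace (powertop_real UNIV) = UNIV"
  by (simp add: PiE_UNIV_domain)

lemma l2_ball_square_summable:
  assumes "f \<in> l2_ball \<Gamma>" "A \<subseteq> \<Gamma>"
  shows "(\<lambda>i. (f i)\<^sup>2) summable_on A" "(\<Sum>\<^sub>\<infinity>i\<in>A. (f i)\<^sup>2) \<le> 1"
proof -
  have partial: "\<And>F. finite F \<Longrightarrow> F \<subseteq> A \<Longrightarrow> (\<Sum>i\<in>F. (f i)\<^sup>2) \<le> 1"
    using assms unfolding l2_ball_def by blast
  show "(\<lambda>i. (f i)\<^sup>2) summable_on A"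
    by (rule nonneg_bdd_above_summable_on) (use partial in \<open>auto intro!: bdd_aboveI[where M=1]\<close>)
  then show "(\<Sum>\<^sub>\<infinity>i\<in>A. (f i)\<^sup>2) \<le> 1"
    using partial by (rule infsum_le_finite_sums)
qed

lemma l2_ball_subset_l2: "l2_ball \<Gamma> \<subseteq> l2 \<Gamma>"
  using l2_ball_square_summable(1)[of _ \<Gamma> \<Gamma>] unfolding l2_def l2_ball_def by auto

lemma l2_square_summable: "g \<in> l2 \<Gamma> \<Longrightarrow> A \<subseteq> \<Gamma> \<Longrightarrow> (\<lambda>i. (g i)\<^sup>2) summable_on A"
  unfolding l2_def using summable_on_subset_banach by blast

lemma young_inequality:
  fixes a b e :: real
  assumes "e > 0"
  shows "\<bar>a * b\<bar> \<le> (e * a\<^sup>2 + b\<^sup>2 / e) / 2"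
proof -
  have "0 \<le> (e * \<bar>a\<bar> - \<bar>b\<bar>)\<^sup>2" by simp
  hence "2 * e * \<bar>a * b\<bar> \<le> e\<^sup>2 * a\<^sup>2 + b\<^sup>2"
    by (simp add: power2_eq_square algebra_simps abs_mult)
  thus ?thesis
    using assms by (simp add: field_simps power2_eq_square)
qed

lemma product_abs_summable:
  fixes f g :: "'i \<Rightarrow> real"
  assumes "(\<lambda>i. (f i)\<^sup>2) summable_on A" "(\<lambda>i. (g i)\<^sup>2) summable_on A"
  shows "(\<lambda>i. norm (f i * g i)) summable_on A"
proof (rule summable_on_comparison_test)
  show "(\<lambda>i. ((f i)\<^sup>2 + (g i)\<^sup>2) / 2) summable_on A"
    using summable_on_cmult_left[OF summable_on_add[OF assms], of "1/2"] by simp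
  show "norm (f x * g x) \<le> ((f x)\<^sup>2 + (g x)\<^sup>2) / 2" for x
    using young_inequality[of 1 "f x" "g x"] by simp
qed auto

lemma tail_pairing_small:
  fixes f g :: "'i \<Rightarrow> real"
  assumes f: "(\<lambda>i. (f i)\<^sup>2) summable_on A" "(\<Sum>\<^sub>\<infinity>i\<in>A. (f i)\<^sup>2) \<le> 1"
    and g: "(\<lambda>i. (g i)\<^sup>2) summable_on A" "(\<Sum>\<^sub>\<infinity>i\<in>A. (g i)\<^sup>2) \<le> e\<^sup>2" and e: "e > 0"
  shows "\<bar>\<Sum>\<^sub>\<infinity>i\<in>A. f i * g i\<bar> \<le> e"
proof -
  have abs: "(\<lambda>i. norm (f i * g i)) summable_on A"
    using product_abs_summable f(1) g(1) by blast
  have parts: "(\<lambda>i. (e/2) * (f i)\<^sup>2) summable_on A" "(\<lambda>i. (1/(2*e)) * (g i)\<^sup>2) summable_on A"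
    by (rule summable_on_cmult_right[OF f(1)], rule summable_on_cmult_right[OF g(1)])
  have "\<bar>\<Sum>\<^sub>\<infinity>i\<in>A. f i * g i\<bar> \<le> (\<Sum>\<^sub>\<infinity>i\<in>A. norm (f i * g i))"
    using norm_infsum_bound[OF abs] by simp
  also have "\<dots> \<le> (\<Sum>\<^sub>\<infinity>i\<in>A. (e/2) * (f i)\<^sup>2 + (1/(2*e)) * (g i)\<^sup>2)"
    using young_inequality[OF e]
    by (intro infsum_mono[OF abs summable_on_add[OF parts]]) (simp add: field_simps)
  also have "\<dots> = (e/2) * (\<Sum>\<^sub>\<infinity>i\<in>A. (f i)\<^sup>2) + (1/(2*e)) * (\<Sum>\<^sub>\<infinity>i\<in>A. (g i)\<^sup>2)"
    unfolding infsum_add[OF parts] infsum_cmult_right[OF f(1)] infsum_cmult_right[OF g(1)] ..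
  also have "\<dots> \<le> (e/2) * 1 + (1/(2*e)) * e\<^sup>2"
    using f(2) g(2) e by (intro add_mono mult_left_mono) auto
  also have "\<dots> = e"
    using e by (simp add: field_simps power2_eq_square)
  finally show ?thesis .
qed

lemma l2_small_tail:
  assumes "g \<in> l2 \<Gamma>" "e > 0"
  obtains F where "finite F" "F \<subseteq> \<Gamma>" "(\<Sum>\<^sub>\<infinity>i\<in>\<Gamma> - F. (g i)\<^sup>2) \<le> e"
proof -
  have g2: "(\<lambda>i. (g i)\<^sup>2) summable_on \<Gamma>" using assms(1) unfolding l2_def by auto
  obtain F where F: "finite F" "F \<subseteq> \<Gamma>" "dist (\<Sum>i\<in>F. (g i)\<^sup>2) (\<Sum>\<^sub>\<infinity>i\<in>\<Gamma>. (g i)\<^sup>2) \<le> e"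
    using infsum_finite_approximation[OF g2 assms(2)] by blast
  have "(\<Sum>\<^sub>\<infinity>i\<in>\<Gamma>. (g i)\<^sup>2) = (\<Sum>\<^sub>\<infinity>i\<in>F \<union> (\<Gamma> - F). (g i)\<^sup>2)"
    using F(2) by (simp add: Un_absorb1)
  also have "\<dots> = (\<Sum>i\<in>F. (g i)\<^sup>2) + (\<Sum>\<^sub>\<infinity>i\<in>\<Gamma> - F. (g i)\<^sup>2)"
    by (subst infsum_Un_disjoint) (use summable_on_subset_banach[OF g2] F in auto)
  finally show ?thesis
    using that F by (simp add: dist_real_def)
qed

lemma l2_inner_split:
  assumes "f \<in> l2_ball \<Gamma>" "g \<in> l2 \<Gamma>" "finite F" "F \<subseteq> \<Gamma>"
  shows "l2_inner \<Gamma> f g = (\<Sum>i\<in>F. f i * g i) + (\<Sum>\<^sub>\<infinity>i\<in>\<Gamma> - F. f i * g i)"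
proof -
  have "(\<lambda>i. norm (f i * g i)) summable_on (\<Gamma> - F)"
    using assms by (intro product_abs_summable l2_ball_square_summable(1) l2_square_summable) auto
  hence tail: "(\<lambda>i. f i * g i) summable_on (\<Gamma> - F)" by (rule abs_summable_summable)
  have "l2_inner \<Gamma> f g = (\<Sum>\<^sub>\<infinity>i\<in>F \<union> (\<Gamma> - F). f i * g i)"
    unfolding l2_inner_def using assms(4) by (simp add: Un_absorb1)
  also have "\<dots> = (\<Sum>\<^sub>\<infinity>i\<in>F. f i * g i) + (\<Sum>\<^sub>\<infinity>i\<in>\<Gamma> - F. f i * g i)"
    by (rule infsum_Un_disjoint) (use tail assms in auto)
  finally show ?thesis using assms by simp
qed

text \<open>The key analytic fact: on the ball, pairing with a fixed l2 vector is continuous for the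
  topology of pointwise convergence, because it is uniformly approximated by finite partial sums.\<close>
lemma continuous_l2_inner_on_l2_ball:
  assumes g: "g \<in> l2 \<Gamma>"
  shows "continuous_map (subtopology (powertop_real UNIV) (l2_ball \<Gamma>)) euclideanreal (\<lambda>f. l2_inner \<Gamma> f g)"
  unfolding Met_TC.continuous_map_to_metric[simplified]
proof (intro ballI allI impI)
  fix f0 and \<epsilon> :: real
  assume f0_top: "f0 \<in> topspace (subtopology (powertop_real UNIV) (l2_ball \<Gamma>))" and "\<epsilon> > 0"
  hence f0: "f0 \<in> l2_ball \<Gamma>" by simp
  define e where "e = \<epsilon> / 3"
  have e: "e > 0" using \<open>\<epsilon> > 0\<close> by (simp add: e_def)
  obtain F where F: "finite F" "F \<subseteq> \<Gamma>" "(\<Sum>\<^sub>\<infinity>i\<in>\<Gamma> - F. (g i)\<^sup>2) \<le> e\<^sup>2"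
    using l2_small_tail[OF g, of "e\<^sup>2"] e by auto
  have tail: "\<bar>\<Sum>\<^sub>\<infinity>i\<in>\<Gamma> - F. f i * g i\<bar> \<le> e" if "f \<in> l2_ball \<Gamma>" for f
    using that g F e by (intro tail_pairing_small l2_ball_square_summable l2_square_summable) auto
  define s where "s = (\<lambda>f::'a \<Rightarrow> real. \<Sum>i\<in>F. f i * g i)"
  have "continuous_map (subtopology (powertop_real UNIV) (l2_ball \<Gamma>)) euclideanreal s"
    unfolding s_def
    by (intro continuous_map_sum continuous_map_real_mult continuous_map_const[THEN iffD2]
        continuous_map_from_subtopology continuous_map_product_projection F) auto
  then obtain U where U: "openin (subtopology (powertop_real UNIV) (l2_ball \<Gamma>)) U" "f0 \<in> U"
      "\<forall>f\<in>U. dist (s f0) (s f) < e"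
    using f0_top e unfolding Met_TC.continuous_map_to_metric[simplified] by metis
  have "dist (l2_inner \<Gamma> f0 g) (l2_inner \<Gamma> f g) < \<epsilon>" if "f \<in> U" for f
  proof -
    have f: "f \<in> l2_ball \<Gamma>" using openin_subset[OF U(1)] that by auto
    have "\<bar>s f0 - s f\<bar> < e" using U(3) that by (simp add: dist_real_def)
    thus ?thesis
      using tail[OF f] tail[OF f0] l2_inner_split[OF f g F(1,2)] l2_inner_split[OF f0 g F(1,2)]
      unfolding s_def e_def dist_real_def by linarith
  qed
  with U show "\<exists>U. openin (subtopology (powertop_real UNIV) (l2_ball \<Gamma>)) U \<and> f0 \<in> U \<and>
      (\<forall>f\<in>U. dist (l2_inner \<Gamma> f0 g) (l2_inner \<Gamma> f g) < \<epsilon>)"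
    by blast
qed

lemma topspace_weak_l2: "topspace (weak_l2 \<Gamma>) = l2 \<Gamma>"
proof -
  have "UNIV \<in> {{f. l2_inner \<Gamma> f g \<in> U} | g U. g \<in> l2 \<Gamma> \<and> open U}"
    by (auto intro!: exI[where x="\<lambda>_. 0"] exI[where x=UNIV] simp: l2_def)
  hence "\<Union>{{f. l2_inner \<Gamma> f g \<in> U} | g U. g \<in> l2 \<Gamma> \<and> open U} = UNIV" by blast
  thus ?thesis unfolding weak_l2_def by simp
qed

lemma continuous_l2_inner_weak:
  assumes "g \<in> l2 \<Gamma>"
  shows "continuous_map (weak_l2 \<Gamma>) euclideanreal (\<lambda>f. l2_inner \<Gamma> f g)"
  unfolding weak_l2_def
proof (rule continuous_map_from_subtopology)
  let ?S = "{{f. l2_inner \<Gamma> f g \<in> U} | g U. g \<in> l2 \<Gamma> \<and> open U}"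
  show "continuous_map (topology_generated_by ?S) euclideanreal (\<lambda>f. l2_inner \<Gamma> f g)"
    unfolding continuous_map_alt
  proof (intro conjI allI impI)
    fix U :: "real set" assume "openin euclideanreal U"
    hence "openin (topology_generated_by ?S) {f. l2_inner \<Gamma> f g \<in> U}"
      using assms by (intro topology_generated_by_Basis) auto
    hence "openin (topology_generated_by ?S)
            ({f. l2_inner \<Gamma> f g \<in> U} \<inter> topspace (topology_generated_by ?S))"
      by (intro openin_Int openin_topspace)
    thus "openin (topology_generated_by ?S)
            ((\<lambda>f. l2_inner \<Gamma> f g) -` U \<inter> topspace (topology_generated_by ?S))"
      by (simp add: vimage_def)
  qed auto
qed

definition unit_vector :: "'i \<Rightarrow> 'i \<Rightarrow> real" where
  "unit_vector i = (\<lambda>j. if j = i then 1 else 0)"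

lemma unit_vector_l2: "i \<in> \<Gamma> \<Longrightarrow> unit_vector i \<in> l2 \<Gamma>"
  unfolding l2_def unit_vector_def
  by (auto, subst summable_on_cong_neutral[where T="{i}" and g="\<lambda>j. (if j = i then 1 else 0)\<^sup>2"]) auto

lemma l2_inner_unit_vector: "i \<in> \<Gamma> \<Longrightarrow> l2_inner \<Gamma> f (unit_vector i) = f i"
proof -
  assume i: "i \<in> \<Gamma>"
  have "l2_inner \<Gamma> f (unit_vector i) = (\<Sum>\<^sub>\<infinity>j\<in>{i}. f j * unit_vector i j)"
    unfolding l2_inner_def by (rule infsum_cong_neutral) (use i in \<open>auto simp: unit_vector_def\<close>)
  thus ?thesis by (simp add: unit_vector_def)
qed

text \<open>Weak-to-pointwise uses the unit vectors; pointwise-to-weak is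
  the continuity lemma for pairings on the ball.\<close>
lemma weak_l2_eq_pointwise_on_l2_ball:
  assumes S: "S \<subseteq> l2_ball \<Gamma>"
  shows "subtopology (weak_l2 \<Gamma>) S = subtopology (powertop_real UNIV) S"
proof -
  have SL: "S \<subseteq> l2 \<Gamma>" using S l2_ball_subset_l2 by blast
  have same_space: "topspace (subtopology (weak_l2 \<Gamma>) S) = topspace (subtopology (powertop_real UNIV) S)"
    using SL by (auto simp: topspace_weak_l2)
  have "continuous_map (subtopology (weak_l2 \<Gamma>) S) euclideanreal (\<lambda>f. f i)" for i
  proof (cases "i \<in> \<Gamma>")
    case True
    show ?thesis
      using continuous_map_from_subtopology[OF continuous_l2_inner_weak[OF unit_vector_l2[OF True]]]
      by (rule continuous_map_eq) (simp add: l2_inner_unit_vector[OF True])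
  next
    case False
    have "continuous_map (subtopology (weak_l2 \<Gamma>) S) euclideanreal (\<lambda>f. 0)" by simp
    thus ?thesis by (rule continuous_map_eq) (use False S in \<open>auto simp: l2_ball_def\<close>)
  qed
  hence weak_to_pointwise: "continuous_map (subtopology (weak_l2 \<Gamma>) S) (subtopology (powertop_real UNIV) S) id"
    by (auto simp: continuous_map_in_subtopology continuous_map_componentwise_UNIV)
  let ?S = "{{f. l2_inner \<Gamma> f g \<in> U} | g U. g \<in> l2 \<Gamma> \<and> open U}"
  have "continuous_map (subtopology (powertop_real UNIV) S) (topology_generated_by ?S) id"
  proof (rule continuous_on_generated_topo)
    fix U assume "U \<in> ?S"
    then obtain g V where gV: "g \<in> l2 \<Gamma>" "open V" "U = {f. l2_inner \<Gamma> f g \<in> V}" by blast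
    have "continuous_map (subtopology (powertop_real UNIV) S) euclideanreal (\<lambda>f. l2_inner \<Gamma> f g)"
      using continuous_map_from_subtopology[OF continuous_l2_inner_on_l2_ball[OF gV(1)], of S] S
      by (simp add: subtopology_subtopology Int_absorb1)
    from openin_continuous_map_preimage[OF this, of V] gV(2)
    show "openin (subtopology (powertop_real UNIV) S) (id -` U \<inter> topspace (subtopology (powertop_real UNIV) S))"
      by (simp add: gV(3) vimage_def Collect_conj_eq Int_commute)
  next
    show "id ` topspace (subtopology (powertop_real UNIV) S) \<subseteq> \<Union> ?S"
      by (auto intro!: exI[where x="\<lambda>_. 0"] exI[where x=UNIV] simp: l2_def)
  qed
  hence pointwise_to_weak: "continuous_map (subtopology (powertop_real UNIV) S) (subtopology (weak_l2 \<Gamma>) S) id"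
    using SL unfolding weak_l2_def by (auto simp: continuous_map_in_subtopology)
  show ?thesis
    unfolding topology_eq
    using topology_finer_continuous_id[OF same_space] topology_finer_continuous_id[OF same_space[symmetric]]
      weak_to_pointwise pointwise_to_weak by blast
qed

text \<open>The ball is an intersection of preimages of closed sets under continuous functions of
  finitely many coordinates, hence closed in the pointwise topology.\<close>
lemma l2_ball_closed: "closedin (powertop_real UNIV) (l2_ball (\<Gamma> :: 'i set))"
proof -
  let ?C = "{{f :: 'i \<Rightarrow> real. f i \<in> {0}} | i. i \<notin> \<Gamma>} \<union> {{f. (\<Sum>i\<in>F. (f i)\<^sup>2) \<in> {..1}} | F. finite F \<and> F \<subseteq> \<Gamma>}"
  have "l2_ball \<Gamma> = \<Inter> ?C" unfolding l2_ball_def by auto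
  moreover have closed_members: "closedin (powertop_real UNIV) K" if "K \<in> ?C" for K
  proof -
    from that consider i where "K = {f. f i \<in> {0}}"
      | F where "finite F" "K = {f. (\<Sum>i\<in>F. (f i)\<^sup>2) \<in> {..1}}"
      by blast
    then show ?thesis
    proof cases
      case 1
      have "closedin (powertop_real UNIV) {f \<in> topspace (powertop_real UNIV). f i \<in> {0}}"
        by (rule closedin_continuous_map_preimage[OF continuous_map_product_projection]) auto
      thus ?thesis using 1 by simp
    next
      case 2
      have "continuous_map (powertop_real UNIV) euclideanreal (\<lambda>f. \<Sum>i\<in>F. (f i)\<^sup>2)"
        by (intro continuous_map_sum continuous_map_real_pow continuous_map_product_projection 2) auto
      from closedin_continuous_map_preimage[OF this, of "{..1}"]
      show ?thesis using 2 by simp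
    qed
  qed
  moreover have "closedin (powertop_real UNIV) (\<Inter> ?C)"
    by (rule closedin_Inter) (use closed_members in blast)+
  ultimately show ?thesis by simp
qed

text \<open>Tychonoff: the ball is a closed subset of the compact cube [-1,1]^I.\<close>
lemma l2_ball_compact: "compactin (powertop_real UNIV) (l2_ball \<Gamma>)"
proof (rule closed_compactin[OF _ _ l2_ball_closed])
  show "compactin (powertop_real UNIV) (PiE UNIV (\<lambda>_. {-1..1::real}))"
    by (simp add: compactin_PiE)
  show "l2_ball \<Gamma> \<subseteq> PiE UNIV (\<lambda>_. {-1..1::real})"
  proof
    fix f assume f: "f \<in> l2_ball \<Gamma>"
    have "(f i)\<^sup>2 \<le> 1\<^sup>2" for i
      using f unfolding l2_ball_def by (cases "i \<in> \<Gamma>") (auto dest!: spec[of _ "{i}"])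
    hence "\<bar>f i\<bar> \<le> 1" for i
      using abs_le_square_iff[of "f i" 1] by simp
    thus "f \<in> PiE UNIV (\<lambda>_. {-1..1::real})"
      by (auto simp: PiE_UNIV_domain abs_le_iff)
  qed
qed

text \<open>A well-order of the carrier type selects a least element from every nonempty set;
  antisymmetry makes this selection canonical, which is what separates Rudin's sets below.\<close>
lemma well_order_least_selection:
  obtains r :: "'a rel" and least :: "'a set \<Rightarrow> 'a" where "antisym r"
    "\<And>S. S \<noteq> {} \<Longrightarrow> least S \<in> S" "\<And>S t. t \<in> S \<Longrightarrow> (least S, t) \<in> r"
proof -
  obtain r :: "'a rel" where "Well_order r" "Field r = UNIV"
    using well_ordering[where 'a='a] by metis
  hence wo: "wo_rel r" by (simp add: wo_rel_def)
  show thesis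
  proof (rule that[of r "wo_rel.minim r"])
    show "antisym r" by (rule wo_rel.ANTISYM[OF wo])
    show "wo_rel.minim r S \<in> S" if "S \<noteq> {}" for S
      using wo_rel.minim_in[OF wo _ that] \<open>Field r = UNIV\<close> by simp
    show "(wo_rel.minim r S, t) \<in> r" if "t \<in> S" for S t
      using wo_rel.minim_least[OF wo _ that] \<open>Field r = UNIV\<close> by simp
  qed
qed

definition (in Metric_space) rudin_A :: "('a set \<Rightarrow> 'a) \<Rightarrow> nat \<Rightarrow> nat \<Rightarrow> 'a \<Rightarrow> 'a set" where
  "rudin_A least m n s = {x \<in> M. least (mball x ((1/2)^m)) = s \<and>
                                 mball x (3 * (1/2)^n) \<subseteq> mball s ((1/2)^m)}"

definition (in Metric_space) rudin_D :: "('a set \<Rightarrow> 'a) \<Rightarrow> nat \<Rightarrow> nat \<Rightarrow> 'a \<Rightarrow> 'a set" where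
  "rudin_D least m n s = (\<Union>x\<in>rudin_A least m n s. mball x ((1/2)^n))"

lemma (in Metric_space) openin_rudin_D: "openin mtopology (rudin_D least m n s)"
  unfolding rudin_D_def by (intro openin_Union) auto

lemma (in Metric_space) rudin_A_subset_D: "rudin_A least m n s \<subseteq> rudin_D least m n s"
  unfolding rudin_D_def by (auto simp: rudin_A_def intro!: bexI)

lemma (in Metric_space) closure_of_rudin_A: "mtopology closure_of (rudin_A least m n s) \<subseteq> rudin_D least m n s"
proof
  fix z assume "z \<in> mtopology closure_of (rudin_A least m n s)"
  then have "\<exists>y\<in>rudin_A least m n s. y \<in> mball z ((1/2)^n)"
    unfolding metric_closure_of by auto
  then obtain y where "y \<in> rudin_A least m n s" "y \<in> mball z ((1/2)^n)" by blast
  then show "z \<in> rudin_D least m n s" unfolding rudin_D_def using commute by auto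
qed

lemma (in Metric_space) rudin_D_small: "rudin_D least m n s \<subseteq> mball s ((1/2)^m)"
proof
  fix z assume "z \<in> rudin_D least m n s"
  then obtain x where x: "x \<in> rudin_A least m n s" "z \<in> mball x ((1/2)^n)"
    unfolding rudin_D_def by blast
  then have "z \<in> mball x (3 * (1/2)^n)"
    using mball_subset_concentric[of "(1/2)^n" "3*(1/2)^n" x] by auto
  then show "z \<in> mball s ((1/2)^m)" using x(1) unfolding rudin_A_def by blast
qed

text \<open>Disjointness on each level: points of rudin_A least m n s and rudin_A least m n t near a
  common point y are less than 3*2^-n apart, so each centre is admissible for the other point;
  if least picks minimal elements of an antisymmetric relation, this forces s = t.\<close>
lemma (in Metric_space) rudin_D_disjoint:
  assumes antisym: "antisym r" and least_le: "\<And>S t. t \<in> S \<Longrightarrow> (least S, t) \<in> r"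
    and ys: "y \<in> rudin_D least m n s" and yt: "y \<in> rudin_D least m n t"
  shows "s = t"
proof -
  obtain x where x: "x \<in> rudin_A least m n s" "y \<in> mball x ((1/2)^n)"
    using ys unfolding rudin_D_def by blast
  obtain x' where x': "x' \<in> rudin_A least m n t" "y \<in> mball x' ((1/2)^n)"
    using yt unfolding rudin_D_def by blast
  have M: "x \<in> M" "x' \<in> M" "y \<in> M" using x x' by auto
  have "d x x' \<le> d x y + d y x'" using M triangle by blast
  also have "\<dots> < 3 * (1/2)^n"
  proof -
    have "d x y < (1/2)^n" "d y x' < (1/2)^n" using x x' commute[of x' y] by auto
    moreover have "(0::real) < (1/2)^n" by simp
    ultimately show ?thesis by linarith
  qed
  finally have "x' \<in> mball x (3 * (1/2)^n)" "x \<in> mball x' (3 * (1/2)^n)"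
    using M commute by auto
  hence "x' \<in> mball s ((1/2)^m)" "x \<in> mball t ((1/2)^m)"
    using x(1) x'(1) unfolding rudin_A_def by auto
  hence "s \<in> mball x' ((1/2)^m)" "t \<in> mball x ((1/2)^m)"
    using commute by auto
  moreover have "least (mball x' ((1/2)^m)) = t" "least (mball x ((1/2)^m)) = s"
    using x(1) x'(1) unfolding rudin_A_def by auto
  ultimately have "(t, s) \<in> r" "(s, t) \<in> r"
    using least_le by metis+
  thus "s = t" using antisym unfolding antisym_def by blast
qed

text \<open>Covering on each level: a point lies in rudin_A least m n s for its own centre s, as soon
  as 3*2^-n is smaller than the room left between it and the boundary of the centre's ball.\<close>
lemma (in Metric_space) rudin_A_cover:
  assumes least_in: "\<And>S. S \<noteq> {} \<Longrightarrow> least S \<in> S" and y: "y \<in> M"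
  shows "\<exists>n s. y \<in> rudin_A least m n s"
proof -
  let ?s = "least (mball y ((1/2)^m))"
  have "?s \<in> mball y ((1/2)^m)" using y by (intro least_in) (simp add: mball_eq_empty not_le)
  hence s: "?s \<in> M" "d ?s y < (1/2)^m" using commute by auto
  obtain n where n: "(1/2::real)^n < ((1/2)^m - d ?s y) / 3"
    using real_arch_pow_inv[of "((1/2)^m - d ?s y) / 3" "1/2"] s by auto
  have "mball y (3 * (1/2)^n) \<subseteq> mball ?s ((1/2)^m)"
  proof
    fix z assume "z \<in> mball y (3 * (1/2)^n)"
    then have z: "z \<in> M" "d y z < 3 * (1/2)^n" by auto
    have "d ?s z \<le> d ?s y + d y z" using triangle s(1) y z(1) by blast
    then show "z \<in> mball ?s ((1/2)^m)" using z n s by auto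
  qed
  then have "y \<in> rudin_A least m n ?s" unfolding rudin_A_def using y by auto
  then show ?thesis by blast
qed

lemma (in Metric_space) refinement_inside_open:
  assumes small_D: "\<And>m n s. D m n s \<subseteq> mball s ((1/2)^m)" and A_D: "\<And>m n s. A m n s \<subseteq> D m n s"
    and cover_A: "\<And>m y. y \<in> M \<Longrightarrow> \<exists>n s. y \<in> A m n s"
    and U: "openin mtopology U" and yU: "y \<in> U"
  shows "\<exists>m n s. y \<in> A m n s \<and> D m n s \<subseteq> U"
proof -
  obtain r where r: "r > 0" "mball y r \<subseteq> U" using U yU unfolding openin_mtopology by blast
  have y: "y \<in> M" using U yU openin_subset by fastforce
  obtain m where m: "(1/2::real)^m < r / 2" using real_arch_pow_inv[of "r/2" "1/2"] r by auto
  obtain n s where yA: "y \<in> A m n s" using cover_A[OF y] by blast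
  have "y \<in> mball s ((1/2)^m)" using small_D A_D yA by blast
  hence ys: "s \<in> M" "d s y < (1/2)^m" by auto
  have "D m n s \<subseteq> mball y r"
  proof
    fix z assume "z \<in> D m n s"
    hence "z \<in> mball s ((1/2)^m)" using small_D by blast
    hence z: "z \<in> M" "d s z < (1/2)^m" by auto
    hence "d y z < r" using triangle[of y s z] commute[of y s] ys y m by linarith
    thus "z \<in> mball y r" using y z by simp
  qed
  thus ?thesis using yA r by blast
qed

lemma (in Metric_space) urysohn_family:
  fixes A D :: "'i \<Rightarrow> 'a set"
  assumes "\<And>i. openin mtopology (D i)" "\<And>i. mtopology closure_of (A i) \<subseteq> D i"
  obtains h :: "'i \<Rightarrow> 'a \<Rightarrow> real" where
    "\<And>i. continuous_map mtopology euclideanreal (h i)"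
    "\<And>i y. y \<in> M \<Longrightarrow> 0 \<le> h i y \<and> h i y \<le> 1"
    "\<And>i y. y \<in> A i \<Longrightarrow> y \<in> M \<Longrightarrow> h i y = 1"
    "\<And>i y. y \<in> M \<Longrightarrow> y \<notin> D i \<Longrightarrow> h i y = 0"
proof -
  have "\<exists>f. continuous_map mtopology euclideanreal f \<and> (\<forall>y\<in>M. 0 \<le> f y \<and> f y \<le> 1)
          \<and> (\<forall>y\<in>A i \<inter> M. f y = 1) \<and> (\<forall>y\<in>M - D i. f y = 0)" for i
  proof -
    have "closedin mtopology (M - D i)"
      using assms(1) by (metis closedin_diff closedin_topspace topspace_mtopology)
    moreover have "disjnt (M - D i) (mtopology closure_of (A i))"
      using assms(2) by (auto simp: disjnt_def)
    ultimately obtain f where f: "continuous_map mtopology (top_of_set {0..1}) f"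
      "f ` (M - D i) \<subseteq> {0}" "f ` (mtopology closure_of (A i)) \<subseteq> {1::real}"
      using Urysohn_lemma[OF normal_space_mtopology, of _ "mtopology closure_of (A i)" 0 1]
      by auto
    moreover have "\<forall>y\<in>A i \<inter> M. f y = 1"
      using f(3) closure_of_subset_Int[of mtopology "A i"] by auto
    ultimately show ?thesis
      by (auto simp: continuous_map_in_subtopology Pi_iff intro!: exI[of _ f])
  qed
  then obtain h where "\<And>i. continuous_map mtopology euclideanreal (h i) \<and>
      (\<forall>y\<in>M. 0 \<le> h i y \<and> h i y \<le> 1) \<and>
      (\<forall>y\<in>A i \<inter> M. h i y = 1) \<and> (\<forall>y\<in>M - D i. h i y = 0)"
    by metis
  then show thesis using that by blast
qed

lemma (in Metric_space) separating_bumps: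
  obtains g :: "nat \<times> nat \<times> 'a \<Rightarrow> 'a \<Rightarrow> real" where
    "\<And>i. continuous_map mtopology euclideanreal (g i)"
    "\<And>i y. y \<in> M \<Longrightarrow> 0 \<le> g i y \<and> g i y \<le> 1"
    "\<And>m n s t y. y \<in> M \<Longrightarrow> g (m, n, s) y \<noteq> 0 \<Longrightarrow> g (m, n, t) y \<noteq> 0 \<Longrightarrow> s = t"
    "\<And>U y. openin mtopology U \<Longrightarrow> y \<in> U \<Longrightarrow>
       \<exists>m n s. g (m, n, s) y > 0 \<and> (\<forall>z\<in>M. g (m, n, s) z > 0 \<longrightarrow> z \<in> U)"
proof -
  obtain r :: "'a rel" and least where antisym: "antisym r"
    and least_in: "\<And>S. S \<noteq> {} \<Longrightarrow> least S \<in> S"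
    and least_le: "\<And>S t. t \<in> S \<Longrightarrow> (least S, t) \<in> r"
    using well_order_least_selection by metis
  define A where "A i = rudin_A least (fst i) (fst (snd i)) (snd (snd i))" for i
  define D where "D i = rudin_D least (fst i) (fst (snd i)) (snd (snd i))" for i
  have open_D: "\<And>i. openin mtopology (D i)"
    and closure_A: "\<And>i. mtopology closure_of (A i) \<subseteq> D i"
    by (simp_all add: A_def D_def openin_rudin_D closure_of_rudin_A)
  obtain g :: "nat \<times> nat \<times> 'a \<Rightarrow> 'a \<Rightarrow> real"
    where g_cont: "\<And>i. continuous_map mtopology euclideanreal (g i)"
    and g_range: "\<And>i y. y \<in> M \<Longrightarrow> 0 \<le> g i y \<and> g i y \<le> 1"
    and g_one: "\<And>i y. y \<in> A i \<Longrightarrow> y \<in> M \<Longrightarrow> g i y = 1"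
    and g_zero: "\<And>i y. y \<in> M \<Longrightarrow> y \<notin> D i \<Longrightarrow> g i y = 0"
    using urysohn_family[where A=A and D=D, OF open_D closure_A] by metis
  have support: "y \<in> rudin_D least m n s" if "y \<in> M" "g (m, n, s) y \<noteq> 0" for m n s y
    using g_zero[of y "(m, n, s)"] that by (auto simp: D_def)
  show thesis
  proof (rule that[OF g_cont g_range])
    show "s = t" if "y \<in> M" "g (m, n, s) y \<noteq> 0" "g (m, n, t) y \<noteq> 0" for m n s t y
      by (rule rudin_D_disjoint[OF antisym least_le support[OF that(1,2)] support[OF that(1,3)]])
    show "\<exists>m n s. g (m, n, s) y > 0 \<and> (\<forall>z\<in>M. g (m, n, s) z > 0 \<longrightarrow> z \<in> U)"
      if U: "openin mtopology U" and yU: "y \<in> U" for U y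
    proof -
      obtain m n s where yA: "y \<in> rudin_A least m n s" and DU: "rudin_D least m n s \<subseteq> U"
        using refinement_inside_open[where A="rudin_A least" and D="rudin_D least",
            OF rudin_D_small rudin_A_subset_D rudin_A_cover[OF least_in] U yU] by blast
      have "y \<in> M" using yA by (simp add: rudin_A_def)
      hence "g (m, n, s) y = 1" using g_one[of y "(m, n, s)"] yA by (simp add: A_def)
      moreover have "z \<in> U" if "z \<in> M" "g (m, n, s) z > 0" for z
        using support[of z m n s] that DU by auto
      ultimately show ?thesis by (intro exI[of _ m] exI[of _ n] exI[of _ s]) auto
    qed
  qed
qed

lemma metrizable_separating_bumps:
  fixes X :: "'a topology"
  assumes "metrizable_space X"
  obtains h :: "nat \<Rightarrow> 'a \<Rightarrow> 'a \<Rightarrow> real" where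
    "\<And>k s. continuous_map X euclideanreal (h k s)"
    "\<And>k s y. y \<in> topspace X \<Longrightarrow> 0 \<le> h k s y \<and> h k s y \<le> 1"
    "\<And>k s t y. y \<in> topspace X \<Longrightarrow> h k s y \<noteq> 0 \<Longrightarrow> h k t y \<noteq> 0 \<Longrightarrow> s = t"
    "\<And>U y. openin X U \<Longrightarrow> y \<in> U \<Longrightarrow> \<exists>k s. h k s y > 0 \<and> (\<forall>z\<in>topspace X. h k s z > 0 \<longrightarrow> z \<in> U)"
proof -
  obtain M d where "Metric_space M d" and X: "X = Metric_space.mtopology M d"
    using assms unfolding metrizable_space_def by blast
  interpret Metric_space M d by fact
  show thesis
  proof (rule separating_bumps)
    fix g :: "nat \<times> nat \<times> 'a \<Rightarrow> 'a \<Rightarrow> real"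
    assume g_cont: "\<And>i. continuous_map mtopology euclideanreal (g i)"
      and g_range: "\<And>i y. y \<in> M \<Longrightarrow> 0 \<le> g i y \<and> g i y \<le> 1"
      and g_disjoint: "\<And>m n s t y. y \<in> M \<Longrightarrow> g (m, n, s) y \<noteq> 0 \<Longrightarrow> g (m, n, t) y \<noteq> 0 \<Longrightarrow> s = t"
      and g_sep: "\<And>U y. openin mtopology U \<Longrightarrow> y \<in> U \<Longrightarrow>
         \<exists>m n s. g (m, n, s) y > 0 \<and> (\<forall>z\<in>M. g (m, n, s) z > 0 \<longrightarrow> z \<in> U)"
    define h where "h k s = g (fst (prod_decode k), snd (prod_decode k), s)" for k s
    have h_enc: "h (prod_encode (m, n)) s = g (m, n, s)" for m n s by (simp add: h_def)
    show thesis
    proof (rule that)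
      show "continuous_map X euclideanreal (h k s)" for k s using g_cont by (simp add: X h_def)
      show "0 \<le> h k s y \<and> h k s y \<le> 1" if "y \<in> topspace X" for k s y
        using g_range that by (simp add: X h_def)
      show "s = t" if "y \<in> topspace X" "h k s y \<noteq> 0" "h k t y \<noteq> 0" for k s t y
        using g_disjoint that by (simp add: X h_def)
      show "\<exists>k s. h k s y > 0 \<and> (\<forall>z\<in>topspace X. h k s z > 0 \<longrightarrow> z \<in> U)"
        if U: "openin X U" and yU: "y \<in> U" for U y
      proof -
        obtain m n s where "g (m, n, s) y > 0" "\<forall>z\<in>M. g (m, n, s) z > 0 \<longrightarrow> z \<in> U"
          using g_sep U yU unfolding X by blast
        thus ?thesis by (intro exI[of _ "prod_encode (m, n)"] exI[of _ s]) (simp add: X h_enc)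
      qed
    qed
  qed
qed

lemma geometric_partial_sum: "(\<Sum>k<N. (1/2::real)^(k+1)) = 1 - (1/2)^N"
  by (induction N) (auto simp: field_simps)

lemma weighted_square_sum_le_1:
  fixes a :: "'i \<Rightarrow> real" and \<kappa> :: "'i \<Rightarrow> nat"
  assumes "finite F" and bound: "\<And>i. i \<in> F \<Longrightarrow> 0 \<le> a i \<and> a i \<le> (1/2)^(\<kappa> i + 1)"
    and inj: "inj_on \<kappa> {i \<in> F. a i \<noteq> 0}"
  shows "(\<Sum>i\<in>F. (a i)\<^sup>2) \<le> 1"
proof -
  let ?F = "{i \<in> F. a i \<noteq> 0}"
  have "(\<Sum>i\<in>F. (a i)\<^sup>2) = (\<Sum>i\<in>?F. (a i)\<^sup>2)"
    using assms(1) by (intro sum.mono_neutral_right) auto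
  also have "\<dots> \<le> (\<Sum>i\<in>?F. (1/2::real)^(\<kappa> i + 1))"
  proof (rule sum_mono)
    fix i assume "i \<in> ?F"
    hence "0 \<le> a i" "a i \<le> (1/2)^(\<kappa> i + 1)" using bound by auto
    moreover have "(1/2::real)^(\<kappa> i + 1) \<le> 1" by (intro power_le_one) auto
    ultimately have "a i * a i \<le> a i * 1" by (intro mult_left_mono) auto
    with \<open>a i \<le> _\<close> show "(a i)\<^sup>2 \<le> (1/2)^(\<kappa> i + 1)" by (simp add: power2_eq_square)
  qed
  also have "\<dots> = (\<Sum>k\<in>\<kappa> ` ?F. (1/2::real)^(k + 1))"
    by (subst sum.reindex[OF inj]) (simp add: o_def)
  also have "\<dots> \<le> (\<Sum>k<Suc (Max (\<kappa> ` ?F)). (1/2::real)^(k + 1))"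
    by (rule sum_mono2) (use assms(1) in \<open>auto simp: less_Suc_eq_le\<close>)
  also have "\<dots> = 1 - (1/2)^(Suc (Max (\<kappa> ` ?F)))" by (rule geometric_partial_sum)
  also have "\<dots> \<le> 1" by simp
  finally show ?thesis .
qed

lemma embedding_map_by_positive_coordinates:
  fixes \<phi> :: "'a \<Rightarrow> 'i \<Rightarrow> real"
  assumes cont: "continuous_map X (powertop_real UNIV) \<phi>" and t1: "t1_space X"
    and sep: "\<And>U y. openin X U \<Longrightarrow> y \<in> U \<Longrightarrow>
                \<exists>i. \<phi> y i > 0 \<and> (\<forall>z\<in>topspace X. \<phi> z i > 0 \<longrightarrow> z \<in> U)"
  shows "embedding_map X (powertop_real UNIV) \<phi>"
proof -
  let ?Y = "subtopology (powertop_real UNIV) (\<phi> ` topspace X)"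
  have inj: "inj_on \<phi> (topspace X)"
  proof
    fix y z assume y: "y \<in> topspace X" and z: "z \<in> topspace X" and eq: "\<phi> y = \<phi> z"
    show "y = z"
    proof (rule ccontr)
      assume "y \<noteq> z"
      have "openin X (topspace X - {z})"
        using t1 z by (simp add: t1_space_closedin_singleton closedin_def)
      then obtain i where "\<phi> y i > 0" "\<forall>w\<in>topspace X. \<phi> w i > 0 \<longrightarrow> w \<in> topspace X - {z}"
        using sep[of "topspace X - {z}" y] y \<open>y \<noteq> z\<close> by blast
      thus False using eq z by auto
    qed
  qed
  have "open_map X ?Y \<phi>"
    unfolding open_map_def
  proof (intro allI impI)
    fix U assume U: "openin X U"
    obtain coord where coord: "\<And>y. y \<in> U \<Longrightarrow>
        \<phi> y (coord y) > 0 \<and> (\<forall>z\<in>topspace X. \<phi> z (coord y) > 0 \<longrightarrow> z \<in> U)"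
      using sep[OF U] by metis
    define W where "W = (\<Union>y\<in>U. {p::'i\<Rightarrow>real. p (coord y) > 0})"
    have "openin (powertop_real UNIV) {p::'i\<Rightarrow>real. p (coord y) > 0}" for y
    proof -
      have "openin (powertop_real UNIV) {p \<in> topspace (powertop_real UNIV). p (coord y) \<in> {0<..}}"
        by (rule openin_continuous_map_preimage[OF continuous_map_product_projection]) auto
      thus ?thesis by simp
    qed
    hence "openin (powertop_real UNIV) W" unfolding W_def by (intro openin_Union) auto
    moreover have "\<phi> ` U = W \<inter> \<phi> ` topspace X"
    proof
      show "\<phi> ` U \<subseteq> W \<inter> \<phi> ` topspace X"
        using coord openin_subset[OF U] unfolding W_def by fastforce
      show "W \<inter> \<phi> ` topspace X \<subseteq> \<phi> ` U"
        using coord unfolding W_def by fastforce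
    qed
    ultimately show "openin ?Y (\<phi> ` U)" using openin_subtopology_Int[of _ W] by simp
  qed
  moreover have "continuous_map X ?Y \<phi>"
    using cont by (auto simp: continuous_map_in_subtopology)
  ultimately have "embedding_map X ?Y \<phi>"
    using injective_open_imp_embedding_map inj by blast
  thus ?thesis using embedding_map_in_subtopology by blast
qed

definition weighted_bumps ::
    "(nat \<Rightarrow> 's \<Rightarrow> 'i) \<Rightarrow> (nat \<Rightarrow> 's \<Rightarrow> 'a \<Rightarrow> real) \<Rightarrow> 'a \<Rightarrow> 'i \<Rightarrow> real" where
  "weighted_bumps lab h y i =
     (if i \<in> range (case_prod lab)
      then (case inv (case_prod lab) i of (k, s) \<Rightarrow> (1/2)^(k+1) * h k s y) else 0)"

lemma weighted_bumps_label:
  assumes "inj (case_prod lab)"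
  shows "weighted_bumps lab h y (lab k s) = (1/2)^(k+1) * h k s y"
proof -
  have "inv (case_prod lab) (lab k s) = (k, s)"
    using inv_f_f[OF assms, of "(k, s)"] by simp
  thus ?thesis unfolding weighted_bumps_def by (auto intro: rev_image_eqI[of "(k, s)"])
qed

lemma weighted_bumps_outside: "i \<notin> range (case_prod lab) \<Longrightarrow> weighted_bumps lab h y i = 0"
  by (simp add: weighted_bumps_def)

lemma weighted_bumps_in_l2_ball:
  assumes lab: "inj (case_prod lab)"
    and range: "\<And>k s. 0 \<le> h k s y \<and> h k s y \<le> 1"
    and disjoint: "\<And>k s t. h k s y \<noteq> 0 \<Longrightarrow> h k t y \<noteq> 0 \<Longrightarrow> s = t"
  shows "weighted_bumps lab h y \<in> l2_ball (range (case_prod lab))"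
  unfolding l2_ball_def
proof (intro CollectI conjI allI impI)
  let ?v = "weighted_bumps lab h y"
  show "?v i = 0" if "i \<notin> range (case_prod lab)" for i
    using that by (rule weighted_bumps_outside)
  fix F assume F: "finite F \<and> F \<subseteq> range (case_prod lab)"
  define level where "level i = fst (inv (case_prod lab) i)" for i
  have level: "level (lab k s) = k" for k s
    using inv_f_f[OF lab, of "(k, s)"] by (simp add: level_def)
  have labelled: "\<exists>k s. i = lab k s" if "i \<in> F" for i
    using F that by fastforce
  show "(\<Sum>i\<in>F. (?v i)\<^sup>2) \<le> 1"
  proof (rule weighted_square_sum_le_1[where \<kappa>=level])
    show "finite F" using F by blast
    show "0 \<le> ?v i \<and> ?v i \<le> (1/2)^(level i + 1)" if iF: "i \<in> F" for i
    proof -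
      obtain k s where i: "i = lab k s" using labelled[OF iF] by blast
      show ?thesis
        using range[of k s] unfolding i level weighted_bumps_label[OF lab]
        by (simp add: mult_left_le)
    qed
    show "inj_on level {i \<in> F. ?v i \<noteq> 0}"
    proof
      fix i j assume i: "i \<in> {i \<in> F. ?v i \<noteq> 0}" and j: "j \<in> {i \<in> F. ?v i \<noteq> 0}"
        and same_level: "level i = level j"
      obtain k s where i_lab: "i = lab k s" using labelled i by blast
      obtain k' t where j_lab: "j = lab k' t" using labelled j by blast
      have "k' = k" using same_level by (simp add: i_lab j_lab level)
      hence "h k s y \<noteq> 0" "h k t y \<noteq> 0"
        using i j by (simp_all add: i_lab j_lab weighted_bumps_label[OF lab])
      hence "s = t" by (rule disjoint)
      thus "i = j" using i_lab j_lab \<open>k' = k\<close> by simp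
    qed
  qed
qed

lemma embedding_weighted_bumps:
  fixes h :: "nat \<Rightarrow> 's \<Rightarrow> 'a \<Rightarrow> real" and lab :: "nat \<Rightarrow> 's \<Rightarrow> 'i"
  assumes lab: "inj (case_prod lab)" and t1: "t1_space X"
    and cont: "\<And>k s. continuous_map X euclideanreal (h k s)"
    and sep: "\<And>U y. openin X U \<Longrightarrow> y \<in> U \<Longrightarrow>
                \<exists>k s. h k s y > 0 \<and> (\<forall>z\<in>topspace X. h k s z > 0 \<longrightarrow> z \<in> U)"
  shows "embedding_map X (powertop_real UNIV) (weighted_bumps lab h)"
proof (rule embedding_map_by_positive_coordinates[OF _ t1])
  show "continuous_map X (powertop_real UNIV) (weighted_bumps lab h)"
    unfolding continuous_map_componentwise_UNIV
  proof
    fix i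
    show "continuous_map X euclideanreal (\<lambda>y. weighted_bumps lab h y i)"
    proof (cases "i \<in> range (case_prod lab)")
      case True
      then obtain k s where i: "i = lab k s" by auto
      show ?thesis
        unfolding i weighted_bumps_label[OF lab]
        by (intro continuous_map_real_mult continuous_map_const[THEN iffD2] cont) auto
    qed (simp add: weighted_bumps_outside)
  qed
  show "\<exists>i. weighted_bumps lab h y i > 0 \<and>
          (\<forall>z\<in>topspace X. weighted_bumps lab h z i > 0 \<longrightarrow> z \<in> U)"
    if U: "openin X U" and yU: "y \<in> U" for U y
  proof -
    obtain k s where "h k s y > 0" "\<forall>z\<in>topspace X. h k s z > 0 \<longrightarrow> z \<in> U"
      using sep[OF U yU] by blast
    thus ?thesis
      by (intro exI[of _ "lab k s"]) (simp add: weighted_bumps_label[OF lab] zero_less_mult_iff)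
  qed
qed

text \<open>The closure of an embedded copy of X inside the unit ball is a compactification of X
  which is weakly compact in l2: the ball is compact for the topology of pointwise convergence,
  which coincides with the weak topology there.\<close>
lemma l2_ball_closure_compactification:
  fixes \<phi> :: "'a \<Rightarrow> 'i \<Rightarrow> real"
  assumes emb: "embedding_map X (powertop_real UNIV) \<phi>" and ball: "\<phi> ` topspace X \<subseteq> l2_ball \<Gamma>"
  defines "C \<equiv> powertop_real UNIV closure_of (\<phi> ` topspace X)"
  shows "C \<subseteq> l2_ball \<Gamma>" and "compactin (weak_l2 \<Gamma>) C"
    and "Hausdorff_space (subtopology (weak_l2 \<Gamma>) C)"
    and "embedding_map X (subtopology (weak_l2 \<Gamma>) C) \<phi>"
    and "subtopology (weak_l2 \<Gamma>) C closure_of (\<phi> ` topspace X) = C"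
proof -
  show CB: "C \<subseteq> l2_ball \<Gamma>"
    unfolding C_def by (rule closure_of_minimal[OF ball l2_ball_closed])
  have weak: "subtopology (weak_l2 \<Gamma>) C = subtopology (powertop_real UNIV) C"
    by (rule weak_l2_eq_pointwise_on_l2_ball[OF CB])
  have C_compact: "compactin (powertop_real UNIV) C"
    by (rule closed_compactin[OF l2_ball_compact CB]) (simp add: C_def)
  have CL: "C \<subseteq> l2 \<Gamma>" using CB l2_ball_subset_l2 by blast
  show "compactin (weak_l2 \<Gamma>) C"
    using C_compact CL weak by (simp add: compactin_subspace topspace_weak_l2)
  show "Hausdorff_space (subtopology (weak_l2 \<Gamma>) C)"
    unfolding weak by (simp add: Hausdorff_space_subtopology Hausdorff_space_product_topology)
  have image_in_C: "\<phi> ` topspace X \<subseteq> C"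
    unfolding C_def by (rule closure_of_subset) simp
  show "embedding_map X (subtopology (weak_l2 \<Gamma>) C) \<phi>"
    unfolding weak embedding_map_in_subtopology using emb image_in_C by simp
  show "subtopology (weak_l2 \<Gamma>) C closure_of (\<phi> ` topspace X) = C"
    unfolding weak closure_of_subtopology using image_in_C
    by (simp add: C_def Int_absorb2 Int_absorb1 closure_of_subset_topspace)
qed

lemma homeomorphic_copy:
  assumes "inj_on \<psi> (topspace T)"
  obtains K where "homeomorphic_map T K \<psi>"
proof -
  define \<psi>' where "\<psi>' = inv_into (topspace T) \<psi>"
  define K where "K = pullback_topology (\<psi> ` topspace T) \<psi>' T"
  have inverse: "\<And>x. x \<in> topspace T \<Longrightarrow> \<psi>' (\<psi> x) = x"
    unfolding \<psi>'_def using assms by (simp add: inv_into_f_f)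
  have topspace_K: "topspace K = \<psi> ` topspace T"
    unfolding K_def topspace_pullback_topology using inverse by auto
  have "homeomorphic_maps T K \<psi> \<psi>'"
    unfolding homeomorphic_maps_def
  proof (intro conjI)
    have "continuous_map T T (\<psi>' \<circ> \<psi>)"
      by (rule continuous_map_eq[OF continuous_map_id]) (simp add: inverse)
    thus "continuous_map T K \<psi>" unfolding K_def
      by (rule continuous_map_pullback') auto
    have "continuous_map K T (id \<circ> \<psi>')" unfolding K_def
      by (rule continuous_map_pullback) simp
    thus "continuous_map K T \<psi>'" by simp
    show "\<forall>x\<in>topspace T. \<psi>' (\<psi> x) = x" using inverse by blast
    show "\<forall>y\<in>topspace K. \<psi> (\<psi>' y) = y" using topspace_K inverse by auto
  qed
  thus thesis using that homeomorphic_map_maps by blast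
qed

lemma dense_embedding_homeomorphic_map:
  assumes emb: "embedding_map X T e" and dense: "T closure_of (e ` topspace X) = topspace T"
    and hom: "homeomorphic_map T K \<psi>"
  shows "embedding_map X K (\<psi> \<circ> e)" and "K closure_of ((\<psi> \<circ> e) ` topspace X) = topspace K"
proof -
  show "embedding_map X K (\<psi> \<circ> e)"
    using embedding_map_compose[OF emb] hom surjective_embedding_map by blast
  have "e ` topspace X \<subseteq> topspace T"
    using emb embedding_map_in_subtopology[of X T "topspace T" e] by simp
  hence "K closure_of (\<psi> ` e ` topspace X) = \<psi> ` (T closure_of (e ` topspace X))"
    by (rule homeomorphic_map_closure_of[OF hom])
  hence "K closure_of ((\<psi> \<circ> e) ` topspace X) = \<psi> ` (T closure_of (e ` topspace X))"
    by (simp add: image_comp)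
  also have "\<dots> = topspace K"
    using dense hom homeomorphic_imp_surjective_map by blast
  finally show "K closure_of ((\<psi> \<circ> e) ` topspace X) = topspace K" .
qed

lemma real_sequence_coding: "\<exists>code :: (nat \<Rightarrow> real) \<Rightarrow> real. inj code"
proof -
  obtain f :: "nat set \<Rightarrow> real" where f: "bij_betw f UNIV UNIV"
    using nat_sets_eqpoll_reals unfolding eqpoll_def by blast
  hence f_inj: "inj f" and g_inj: "inj (inv f)"
    by (simp_all add: bij_betw_def bij_betw_inv_into inj_on_inv_into)
  define code where "code u = f {prod_encode (k, j) | k j. j \<in> inv f (u k)}" for u
  have "u = v" if "code u = code v" for u v
  proof -
    have sets: "{prod_encode (k, j) | k j. j \<in> inv f (u k)} = {prod_encode (k, j) | k j. j \<in> inv f (v k)}"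
      using that f_inj unfolding code_def inj_def by blast
    have "j \<in> inv f (w k) \<longleftrightarrow> prod_encode (k, j) \<in> {prod_encode (k, j) | k j. j \<in> inv f (w k)}"
      for w k j using inj_prod_encode[of UNIV] unfolding inj_on_def by blast
    hence "inv f (u k) = inv f (v k)" for k using sets by blast
    thus "u = v" using g_inj unfolding inj_def by blast
  qed
  thus ?thesis unfolding inj_def by blast
qed

text \<open>Labels for the coordinates: the pair (k, s) becomes the function that is k + 1 at s
  and 0 elsewhere. This realises the index set of the Hilbert space inside the type of the
  compactification.\<close>
definition label :: "nat \<Rightarrow> 'a \<Rightarrow> 'a \<Rightarrow> real" where
  "label k s = (\<lambda>z. if z = s then real k + 1 else 0)"

lemma inj_label: "inj (case_prod label)"
proof (rule injI, clarsimp)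
  fix k s k' s' assume "label k s = label k' s'"
  hence "label k s s = label k' s' s" by simp
  thus "k = k' \<and> s = s'" by (auto simp: label_def split: if_splits)
qed

lemma inj_on_l2_ball_label_coding:
  fixes code :: "(nat \<Rightarrow> real) \<Rightarrow> real"
  assumes "inj code"
  shows "inj_on (\<lambda>p s. code (\<lambda>k. p (label k s))) (l2_ball (range (case_prod (label :: nat \<Rightarrow> 'a \<Rightarrow> _))))"
proof
  fix p q assume p: "p \<in> l2_ball (range (case_prod (label :: nat \<Rightarrow> 'a \<Rightarrow> _)))"
    and q: "q \<in> l2_ball (range (case_prod (label :: nat \<Rightarrow> 'a \<Rightarrow> _)))"
    and eq: "(\<lambda>s. code (\<lambda>k. p (label k s))) = (\<lambda>s. code (\<lambda>k. q (label k s)))"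
  have "p (label k s) = q (label k s)" for k s
    using fun_cong[OF eq, of s] assms unfolding inj_def by metis
  moreover have "p i = q i" if "i \<notin> range (case_prod label)" for i
    using p q that unfolding l2_ball_def by auto
  ultimately show "p = q" by (metis ext rangeE case_prod_conv surj_pair)
qed

text \<open>Final step: a weakly compact subset of the label-indexed unit ball containing a dense
  embedded copy of X is moved, by coding each point of it as a function of s, into the carrier
  type required by the statement.\<close>
lemma labelled_compactification:
  fixes \<phi> :: "'b \<Rightarrow> ('a \<Rightarrow> real) \<Rightarrow> real"
  defines "\<Gamma> \<equiv> range (case_prod (label :: nat \<Rightarrow> 'a \<Rightarrow> 'a \<Rightarrow> real))"
  assumes CB: "C \<subseteq> l2_ball \<Gamma>" and compact: "compactin (weak_l2 \<Gamma>) C"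
    and Hausdorff: "Hausdorff_space (subtopology (weak_l2 \<Gamma>) C)"
    and emb: "embedding_map X (subtopology (weak_l2 \<Gamma>) C) \<phi>"
    and dense: "subtopology (weak_l2 \<Gamma>) C closure_of (\<phi> ` topspace X) = C"
  shows "\<exists>(K :: ('a \<Rightarrow> real) topology) e.
           uniform_eberlein K \<and> Hausdorff_space K \<and>
           embedding_map X K e \<and> K closure_of (e ` topspace X) = topspace K"
proof -
  let ?T = "subtopology (weak_l2 \<Gamma>) C"
  have topspace_T: "topspace ?T = C"
    using subset_trans[OF CB l2_ball_subset_l2] by (simp add: topspace_weak_l2 Int_absorb1)
  obtain code :: "(nat \<Rightarrow> real) \<Rightarrow> real" where "inj code"
    using real_sequence_coding by blast
  define \<psi> where "\<psi> p = (\<lambda>s. code (\<lambda>k. p (label k s)))" for p :: "('a \<Rightarrow> real) \<Rightarrow> real"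
  have "inj_on \<psi> (topspace ?T)"
    unfolding topspace_T \<psi>_def
    using inj_on_subset[OF inj_on_l2_ball_label_coding[OF \<open>inj code\<close>] CB[unfolded \<Gamma>_def]] .
  then obtain K :: "('a \<Rightarrow> real) topology" where hom: "homeomorphic_map ?T K \<psi>"
    using homeomorphic_copy by blast
  have K_T: "K homeomorphic_space ?T"
    using hom homeomorphic_map_imp_homeomorphic_space homeomorphic_space_sym by blast
  have "uniform_eberlein K"
    unfolding uniform_eberlein_def
  proof (intro conjI exI)
    show "compact_space K"
      using compact K_T homeomorphic_compact_space compactin_subspace by blast
  qed (use K_T CB l2_ball_subset_l2 compact in auto)
  moreover have "Hausdorff_space K"
    using Hausdorff K_T homeomorphic_Hausdorff_space by blast
  moreover have "embedding_map X K (\<psi> \<circ> \<phi>)" "K closure_of ((\<psi> \<circ> \<phi>) ` topspace X) = topspace K"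
    using dense_embedding_homeomorphic_map[OF emb _ hom] dense unfolding topspace_T by simp_all
  ultimately show ?thesis by blast
qed

theorem theorem1:
  fixes X :: "'a topology"
  assumes "metrizable_space X"
  shows "\<exists>(K :: ('a \<Rightarrow> real) topology) e.
           uniform_eberlein K \<and> Hausdorff_space K \<and>
           embedding_map X K e \<and> K closure_of (e ` topspace X) = topspace K"
proof -
  obtain h :: "nat \<Rightarrow> 'a \<Rightarrow> 'a \<Rightarrow> real" where
    cont: "\<And>k s. continuous_map X euclideanreal (h k s)" and
    range: "\<And>k s y. y \<in> topspace X \<Longrightarrow> 0 \<le> h k s y \<and> h k s y \<le> 1" and
    disjoint: "\<And>k s t y. y \<in> topspace X \<Longrightarrow> h k s y \<noteq> 0 \<Longrightarrow> h k t y \<noteq> 0 \<Longrightarrow> s = t" and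
    sep: "\<And>U y. openin X U \<Longrightarrow> y \<in> U \<Longrightarrow>
            \<exists>k s. h k s y > 0 \<and> (\<forall>z\<in>topspace X. h k s z > 0 \<longrightarrow> z \<in> U)"
    using metrizable_separating_bumps[OF assms] by blast
  let ?\<phi> = "weighted_bumps label h"
  have emb: "embedding_map X (powertop_real UNIV) ?\<phi>"
    using embedding_weighted_bumps[OF inj_label metrizable_imp_t1_space[OF assms] cont sep] .
  have ball: "?\<phi> ` topspace X \<subseteq> l2_ball (range (case_prod label))"
  proof (rule image_subsetI)
    fix y assume y: "y \<in> topspace X"
    show "?\<phi> y \<in> l2_ball (range (case_prod label))"
      by (intro weighted_bumps_in_l2_ball[OF inj_label] range[OF y] disjoint[OF y])
  qed
  show ?thesis
    by (rule labelled_compactification[OF l2_ball_closure_compactification[OF emb ball]])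
qed

end
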